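(* Let $k$ be a finite field of odd characteristic, $b:V\times V\to W$ a non-degenerate Hermitian $k$-bilinear map, and $\mathcal{X}$ a direct sum decomposition of $V$ with associated set $\mathcal{E}=\mathcal{E}(\mathcal{X})$ of supplementary idempotents. (i) $\mathcal{E}\subseteq\operatorname{Sym}(b)$ if and only if $\mathcal{X}$ is a $\perp$-decomposition of $b$. (ii) $\mathcal{X}$ is a fully refined $\perp$-decomposition of $b$ if and only if $\mathcal{E}$ is a frame of the Jordan algebra $\operatorname{Sym}(b)$. (iii) If $\mathcal{X}$ is a $\perp$-decomposition and $(\alpha,\hat\alpha)\in\operatorname{Isom}^*(b)$, then $\mathcal{X}\alpha=\mathcal{X}(\alpha^{-1}\mathcal{E}\alpha)$ and $\alpha^{-1}\mathcal{E}\alpha=\mathcal{E}(\mathcal{X}\alpha)$, where $\alpha^{-1}\mathcal{E}\alpha=\{\alpha^{-1}e\alpha: e\in\mathcal{E}\}$. In particular $\operatorname{Isom}^*(b)$ acts (by conjugation) on the set of all frames of $\operatorname{Sym}(b)$.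
   Context: $b$ is Hermitian if $W=b(V,V)$ and $b(u,v)=b(v,u)\theta$ for some $\theta\in\mathrm{GL}(W)$; non-degenerate if $b(u,V)=0=b(V,u)$ implies $u=0$. $\operatorname{Sym}(b)=\{f\in\operatorname{End}V: b(uf,v)=b(u,vf)\ \forall u,v\}$, a Jordan algebra under $x\bullet y=\tfrac12(xy+yx)$. For a direct decomposition $\mathcal{X}$ of $V$, $\mathcal{E}(\mathcal{X})$ is the set of projections $e_X$ ($X\in\mathcal{X}$) onto $X$ along the sum of the other members; for a set $\mathcal{F}$ of supplementary idempotents (pairwise orthogonal, summing to $1$) of $\operatorname{End}V$, $\mathcal{X}(\mathcal{F})=\{Vf: f\in\mathcal{F}\}$. A $\perp$-decomposition of $b$ is a set of subspaces, pairwise $b$-orthogonal ($b(X,Y)=0$ for distinct $X,Y$), generating $V$, with no proper subset generating $V$; it is fully refined if each restriction $b_X:X\times X\to b(X,X)$ has no $\perp$-decomposition other than $\{X\}$. In a Jordan algebra, idempotents $e,f$ are orthogonal if $e\bullet f=efe=fef=0$; an idempotent is primitive if it is not a sum of two proper (non-zero, non-identity) orthogonal idempotents; a frame is a set of primitive pairwise orthogonal idempotents summing to $1$. $\operatorname{Isom}^*(b)=\{(\alpha,\hat\alpha)\in\mathrm{GL}(V)\times\mathrm{GL}(W): b(u\alpha,v\alpha)=b(u,v)\hat\alpha\}$. *)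

theory Defs
  imports Complex_Main
begin

text \<open>Maps act on the left here: the paper's u f is f u, the paper's product x y
  (first x then y) is y \<circ> x, and the paper's conjugate alpha^-1 e alpha is
  alpha \<circ> e \<circ> inv alpha.\<close>

definition bilinear_map ::
  "('k::field \<Rightarrow> 'v::ab_group_add \<Rightarrow> 'v) \<Rightarrow> ('k \<Rightarrow> 'w::ab_group_add \<Rightarrow> 'w) \<Rightarrow> ('v \<Rightarrow> 'v \<Rightarrow> 'w) \<Rightarrow> bool" where
  "bilinear_map sV sW b \<longleftrightarrow>
     (\<forall>v. Vector_Spaces.linear sV sW (\<lambda>u. b u v)) \<and> (\<forall>u. Vector_Spaces.linear sV sW (b u))"

definition hermitian ::
  "('k::field \<Rightarrow> 'v::ab_group_add \<Rightarrow> 'v) \<Rightarrow> ('k \<Rightarrow> 'w::ab_group_add \<Rightarrow> 'w) \<Rightarrow> ('v \<Rightarrow> 'v \<Rightarrow> 'w) \<Rightarrow> bool" where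
  "hermitian sV sW b \<longleftrightarrow>
     module.span sW {b u v | u v. True} = UNIV \<and>
     (\<exists>\<theta>. Vector_Spaces.linear sW sW \<theta> \<and> bij \<theta> \<and> (\<forall>u v. b u v = \<theta> (b v u)))"

definition nondegenerate :: "('v::ab_group_add \<Rightarrow> 'v \<Rightarrow> 'w::ab_group_add) \<Rightarrow> bool" where
  "nondegenerate b \<longleftrightarrow> (\<forall>u. (\<forall>v. b u v = 0) \<and> (\<forall>v. b v u = 0) \<longrightarrow> u = 0)"

definition Sym ::
  "('k::field \<Rightarrow> 'v::ab_group_add \<Rightarrow> 'v) \<Rightarrow> ('v \<Rightarrow> 'v \<Rightarrow> 'w) \<Rightarrow> ('v \<Rightarrow> 'v) set" where
  "Sym sV b = {f. Vector_Spaces.linear sV sV f \<and> (\<forall>u v. b (f u) v = b u (f v))}"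

definition direct_decomp :: "('k::field \<Rightarrow> 'v::ab_group_add \<Rightarrow> 'v) \<Rightarrow> 'v set set \<Rightarrow> bool" where
  "direct_decomp sV \<X> \<longleftrightarrow> finite \<X> \<and>
     (\<forall>X\<in>\<X>. module.subspace sV X \<and> X \<noteq> {0}) \<and>
     module.span sV (\<Union>\<X>) = UNIV \<and>
     (\<forall>X\<in>\<X>. X \<inter> module.span sV (\<Union>(\<X> - {X})) = {0})"

definition proj :: "('k::field \<Rightarrow> 'v::ab_group_add \<Rightarrow> 'v) \<Rightarrow> 'v set set \<Rightarrow> 'v set \<Rightarrow> 'v \<Rightarrow> 'v" where
  "proj sV \<X> X u = (THE x. x \<in> X \<and> u - x \<in> module.span sV (\<Union>(\<X> - {X})))"

definition proj_set :: "('k::field \<Rightarrow> 'v::ab_group_add \<Rightarrow> 'v) \<Rightarrow> 'v set set \<Rightarrow> ('v \<Rightarrow> 'v) set" where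
  "proj_set sV \<X> = (\<lambda>X. proj sV \<X> X) ` \<X>"

definition decomp_of :: "('v \<Rightarrow> 'v) set \<Rightarrow> 'v set set" where
  "decomp_of F = (\<lambda>f. range f) ` F"

definition b_orth :: "('v \<Rightarrow> 'v \<Rightarrow> 'w::zero) \<Rightarrow> 'v set \<Rightarrow> 'v set \<Rightarrow> bool" where
  "b_orth b X Y \<longleftrightarrow> (\<forall>x\<in>X. \<forall>y\<in>Y. b x y = 0)"

definition perp_decomp_on ::
  "('k::field \<Rightarrow> 'v::ab_group_add \<Rightarrow> 'v) \<Rightarrow> ('v \<Rightarrow> 'v \<Rightarrow> 'w::zero) \<Rightarrow> 'v set \<Rightarrow> 'v set set \<Rightarrow> bool" where
  "perp_decomp_on sV b U \<X> \<longleftrightarrow>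
     (\<forall>X\<in>\<X>. module.subspace sV X \<and> X \<subseteq> U) \<and>
     (\<forall>X\<in>\<X>. \<forall>Y\<in>\<X>. X \<noteq> Y \<longrightarrow> b_orth b X Y) \<and>
     module.span sV (\<Union>\<X>) = U \<and>
     (\<forall>\<Y>. \<Y> \<subset> \<X> \<longrightarrow> module.span sV (\<Union>\<Y>) \<noteq> U)"

definition perp_decomp ::
  "('k::field \<Rightarrow> 'v::ab_group_add \<Rightarrow> 'v) \<Rightarrow> ('v \<Rightarrow> 'v \<Rightarrow> 'w::zero) \<Rightarrow> 'v set set \<Rightarrow> bool" where
  "perp_decomp sV b \<X> \<longleftrightarrow> perp_decomp_on sV b UNIV \<X>"

definition fully_refined ::
  "('k::field \<Rightarrow> 'v::ab_group_add \<Rightarrow> 'v) \<Rightarrow> ('v \<Rightarrow> 'v \<Rightarrow> 'w::zero) \<Rightarrow> 'v set set \<Rightarrow> bool" where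
  "fully_refined sV b \<X> \<longleftrightarrow> perp_decomp sV b \<X> \<and>
     (\<forall>X\<in>\<X>. \<forall>\<Y>. perp_decomp_on sV b X \<Y> \<longrightarrow> \<Y> = {X})"

definition jprod :: "('k::field \<Rightarrow> 'v::ab_group_add \<Rightarrow> 'v) \<Rightarrow> ('v \<Rightarrow> 'v) \<Rightarrow> ('v \<Rightarrow> 'v) \<Rightarrow> 'v \<Rightarrow> 'v" where
  "jprod sV x y = (\<lambda>u. sV (inverse 2) (y (x u) + x (y u)))"

definition j_idempotent :: "('k::field \<Rightarrow> 'v::ab_group_add \<Rightarrow> 'v) \<Rightarrow> ('v \<Rightarrow> 'v) \<Rightarrow> bool" where
  "j_idempotent sV e \<longleftrightarrow> jprod sV e e = e"

definition j_orthogonal :: "('k::field \<Rightarrow> 'v::ab_group_add \<Rightarrow> 'v) \<Rightarrow> ('v \<Rightarrow> 'v) \<Rightarrow> ('v \<Rightarrow> 'v) \<Rightarrow> bool" where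
  "j_orthogonal sV e f \<longleftrightarrow> jprod sV e f = (\<lambda>_. 0) \<and> e \<circ> f \<circ> e = (\<lambda>_. 0) \<and> f \<circ> e \<circ> f = (\<lambda>_. 0)"

definition j_primitive ::
  "('k::field \<Rightarrow> 'v::ab_group_add \<Rightarrow> 'v) \<Rightarrow> ('v \<Rightarrow> 'v) set \<Rightarrow> ('v \<Rightarrow> 'v) \<Rightarrow> bool" where
  "j_primitive sV J e \<longleftrightarrow> e \<in> J \<and> j_idempotent sV e \<and>
     \<not> (\<exists>f\<in>J. \<exists>g\<in>J. j_idempotent sV f \<and> j_idempotent sV g \<and>
          f \<noteq> (\<lambda>_. 0) \<and> f \<noteq> id \<and> g \<noteq> (\<lambda>_. 0) \<and> g \<noteq> id \<and>
          j_orthogonal sV f g \<and> e = (\<lambda>u. f u + g u))"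

definition j_frame ::
  "('k::field \<Rightarrow> 'v::ab_group_add \<Rightarrow> 'v) \<Rightarrow> ('v \<Rightarrow> 'v) set \<Rightarrow> ('v \<Rightarrow> 'v) set \<Rightarrow> bool" where
  "j_frame sV J F \<longleftrightarrow> finite F \<and> (\<forall>e\<in>F. j_primitive sV J e) \<and>
     (\<forall>e\<in>F. \<forall>f\<in>F. e \<noteq> f \<longrightarrow> j_orthogonal sV e f) \<and>
     (\<lambda>u. \<Sum>e\<in>F. e u) = id"

definition Isom_star ::
  "('k::field \<Rightarrow> 'v::ab_group_add \<Rightarrow> 'v) \<Rightarrow> ('k \<Rightarrow> 'w::ab_group_add \<Rightarrow> 'w) \<Rightarrow> ('v \<Rightarrow> 'v \<Rightarrow> 'w)
     \<Rightarrow> (('v \<Rightarrow> 'v) \<times> ('w \<Rightarrow> 'w)) set" where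
  "Isom_star sV sW b = {(\<alpha>, \<alpha>'). Vector_Spaces.linear sV sV \<alpha> \<and> bij \<alpha> \<and>
      Vector_Spaces.linear sW sW \<alpha>' \<and> bij \<alpha>' \<and> (\<forall>u v. b (\<alpha> u) (\<alpha> v) = \<alpha>' (b u v))}"

definition conj_set :: "('v \<Rightarrow> 'v) \<Rightarrow> ('v \<Rightarrow> 'v) set \<Rightarrow> ('v \<Rightarrow> 'v) set" where
  "conj_set \<alpha> E = (\<lambda>e. \<alpha> \<circ> e \<circ> inv \<alpha>) ` E"

end

theory Submission
  imports Defs
begin

text \<open>A projection \<open>e\<^sub>X\<close> is self-adjoint exactly when \<open>X\<close> is orthogonal to the other
  members, since \<open>e\<^sub>X u \<in> X\<close> and \<open>u - e\<^sub>X u\<close> lies in their sum. Away from characteristic 2,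
  Jordan-orthogonal idempotents \<open>f, g\<close> satisfy \<open>fg = gf = 0\<close>, so a splitting
  \<open>e\<^sub>X = f + g\<close> inside \<open>Sym(b)\<close> makes \<open>{Vf, Vg}\<close> a \<open>\<perp>\<close>-decomposition of \<open>X\<close>.
  Conversely, if \<open>X = Y + Z\<close> with \<open>Y \<perp> Z\<close>, non-degeneracy forces \<open>Y \<inter> Z = 0\<close>, and the
  projection onto \<open>Y\<close> along \<open>Z\<close> plus the other members is self-adjoint and splits \<open>e\<^sub>X\<close>.
  Conjugating by an isometry preserves \<open>Sym(b)\<close>, the Jordan product, zero and identity,
  hence primitivity and frames, and it carries \<open>e\<^sub>X\<close> to the projection onto \<open>X\<alpha>\<close>.\<close>

lemma two_neq_zero_if_odd_char:
  assumes "odd CHAR('a::field)"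
  shows "(2::'a) \<noteq> 0"
proof
  assume "(2::'a) = 0"
  then have "CHAR('a) dvd 2"
    using of_nat_eq_0_iff_char_dvd[where 'a='a, of 2] by simp
  then have "CHAR('a) \<le> 2" "CHAR('a) \<noteq> 0" by (auto dest: dvd_imp_le intro!: Nat.gr0I)
  with assms CHAR_not_1[where 'a='a] show False by presburger
qed

context vector_space
begin

sublocale endo: vector_space_pair scale scale ..

lemma linear_inv:
  assumes "Vector_Spaces.linear scale scale f" and "bij f"
  shows "Vector_Spaces.linear scale scale (inv f)"
  using assms bij_module_hom_imp_inv_module_hom module_hom_iff_linear by blast

lemma span_Un_span: "span (A \<union> span B) = span (A \<union> B)"
  by (simp add: span_Un span_span)

section \<open>Projections of a direct decomposition\<close>

context
  fixes \<X> :: "'b set set"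
  assumes dd: "direct_decomp scale \<X>"
begin

lemma direct_decomp_subspace: "X \<in> \<X> \<Longrightarrow> subspace X"
  and direct_decomp_nonzero: "X \<in> \<X> \<Longrightarrow> X \<noteq> {0}"
  and direct_decomp_indep: "X \<in> \<X> \<Longrightarrow> X \<inter> span (\<Union>(\<X> - {X})) = {0}"
  and direct_decomp_finite: "finite \<X>"
  and direct_decomp_span: "span (\<Union>\<X>) = UNIV"
  using dd by (auto simp: direct_decomp_def)

lemma proj_unique:
  assumes X: "X \<in> \<X>"
  shows "\<exists>!x. x \<in> X \<and> u - x \<in> span (\<Union>(\<X> - {X}))"
proof -
  have "\<Union>\<X> = X \<union> \<Union>(\<X> - {X})" using X by blast
  then have "u \<in> span (X \<union> \<Union>(\<X> - {X}))" using direct_decomp_span by simp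
  then obtain x y where "u = x + y" "x \<in> span X" "y \<in> span (\<Union>(\<X> - {X}))"
    by (auto simp: span_Un)
  moreover have "span X = X" using direct_decomp_subspace[OF X] by simp
  ultimately have ex: "\<exists>x. x \<in> X \<and> u - x \<in> span (\<Union>(\<X> - {X}))"
    by (metis add_diff_cancel_left')
  have "x = x'" if "x \<in> X" "x' \<in> X"
    "u - x \<in> span (\<Union>(\<X> - {X}))" "u - x' \<in> span (\<Union>(\<X> - {X}))" for x x'
  proof -
    have "(u - x) - (u - x') \<in> span (\<Union>(\<X> - {X}))" using that(3,4) by (rule span_diff)
    then have "x' - x \<in> X \<inter> span (\<Union>(\<X> - {X}))"
      using that direct_decomp_subspace[OF X] by (simp add: subspace_diff)
    then show ?thesis using direct_decomp_indep[OF X] by simp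
  qed
  with ex show ?thesis by blast
qed

lemma proj_in: "X \<in> \<X> \<Longrightarrow> proj scale \<X> X u \<in> X"
  and proj_complement: "X \<in> \<X> \<Longrightarrow> u - proj scale \<X> X u \<in> span (\<Union>(\<X> - {X}))"
  unfolding proj_def using theI'[OF proj_unique] by blast+

lemma proj_eqI:
  "X \<in> \<X> \<Longrightarrow> x \<in> X \<Longrightarrow> u - x \<in> span (\<Union>(\<X> - {X})) \<Longrightarrow> proj scale \<X> X u = x"
  using proj_unique proj_in proj_complement by blast

lemma linear_proj:
  assumes X: "X \<in> \<X>"
  shows "Vector_Spaces.linear scale scale (proj scale \<X> X)"
proof -
  let ?p = "proj scale \<X> X" and ?R = "span (\<Union>(\<X> - {X}))"
  have "?p (x + y) = ?p x + ?p y" for x y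
  proof (rule proj_eqI[OF X])
    show "?p x + ?p y \<in> X"
      using direct_decomp_subspace[OF X] proj_in[OF X] by (simp add: subspace_add)
    have "(x - ?p x) + (y - ?p y) \<in> ?R" using proj_complement[OF X] by (simp add: span_add)
    then show "x + y - (?p x + ?p y) \<in> ?R" by (simp add: algebra_simps)
  qed
  moreover have "?p (scale c x) = scale c (?p x)" for c x
  proof (rule proj_eqI[OF X])
    show "scale c (?p x) \<in> X"
      using direct_decomp_subspace[OF X] proj_in[OF X] by (simp add: subspace_scale)
    have "scale c (x - ?p x) \<in> ?R" using proj_complement[OF X] by (simp add: span_scale)
    then show "scale c x - scale c (?p x) \<in> ?R" by (simp add: scale_right_diff_distrib)
  qed
  ultimately show ?thesis
    by (simp add: Vector_Spaces.linear_iff vector_space_axioms)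
qed

lemma proj_self: "X \<in> \<X> \<Longrightarrow> x \<in> X \<Longrightarrow> proj scale \<X> X x = x"
  by (rule proj_eqI) (auto simp: span_zero)

lemma proj_vanishes: "X \<in> \<X> \<Longrightarrow> s \<in> span (\<Union>(\<X> - {X})) \<Longrightarrow> proj scale \<X> X s = 0"
  by (rule proj_eqI) (auto simp: subspace_0 direct_decomp_subspace)

lemma proj_other:
  "X \<in> \<X> \<Longrightarrow> Y \<in> \<X> \<Longrightarrow> X \<noteq> Y \<Longrightarrow> y \<in> Y \<Longrightarrow> proj scale \<X> X y = 0"
  by (rule proj_vanishes) (auto intro: span_base)

lemma proj_idem: "X \<in> \<X> \<Longrightarrow> proj scale \<X> X (proj scale \<X> X u) = proj scale \<X> X u"
  by (simp add: proj_self proj_in)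

lemma proj_proj_other:
  "X \<in> \<X> \<Longrightarrow> Y \<in> \<X> \<Longrightarrow> X \<noteq> Y \<Longrightarrow> proj scale \<X> X (proj scale \<X> Y u) = 0"
  by (simp add: proj_other proj_in)

lemma range_proj: "X \<in> \<X> \<Longrightarrow> range (proj scale \<X> X) = X"
  using proj_in proj_self by (metis image_subset_iff rangeI subsetI subset_antisym)

lemma inj_on_proj: "inj_on (proj scale \<X>) \<X>"
  by (metis inj_onI range_proj)

lemma sum_proj: "(\<Sum>X\<in>\<X>. proj scale \<X> X u) = u"
proof -
  have "(\<Sum>X\<in>\<X>. proj scale \<X> X y) = y" if "y \<in> \<Union>\<X>" for y
  proof -
    from that obtain Y where Y: "Y \<in> \<X>" "y \<in> Y" by blast
    have "(\<Sum>X\<in>\<X>. proj scale \<X> X y) = proj scale \<X> Y y + (\<Sum>X\<in>\<X>-{Y}. proj scale \<X> X y)"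
      using direct_decomp_finite Y by (simp add: sum.remove)
    also have "(\<Sum>X\<in>\<X>-{Y}. proj scale \<X> X y) = 0"
      using Y by (intro sum.neutral) (auto intro: proj_other)
    finally show ?thesis using proj_self[OF Y] by simp
  qed
  moreover have "Vector_Spaces.linear scale scale (\<lambda>u. \<Sum>X\<in>\<X>. proj scale \<X> X u)"
    using linear_proj by (intro endo.linear_compose_sum ballI)
  ultimately show ?thesis
    using endo.linear_eq_on_span[OF _ linear_id, of _ "\<Union>\<X>" u] direct_decomp_span by auto
qed

end

lemma direct_decomp_pair:
  assumes "subspace Y" "subspace T" "Y \<noteq> {0}" "T \<noteq> {0}"
    and "Y \<inter> T = {0}" and "span (Y \<union> T) = UNIV"
  shows "direct_decomp scale {Y, T}"
proof -
  have "Y \<noteq> T" using assms(3,5) by auto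
  then have "\<Union>({Y, T} - {Y}) = T" "\<Union>({Y, T} - {T}) = Y" by auto
  moreover have "span Y = Y" "span T = T" using assms(1,2) by simp_all
  ultimately show ?thesis
    using assms unfolding direct_decomp_def by (simp add: Int_commute del: span_eq_iff)
qed

text \<open>Projecting onto \<open>Y\<close> along \<open>Z\<close> and the other members refines \<open>e\<^sub>X\<close>; this is
  how a splitting \<open>X = Y \<oplus> Z\<close> contradicts primitivity of \<open>e\<^sub>X\<close>.\<close>

context
  fixes \<X> X Y Z
  assumes dd: "direct_decomp scale \<X>" and X: "X \<in> \<X>"
    and Y: "subspace Y" "Y \<noteq> {0}" and Z: "subspace Z" "Z \<noteq> {0}"
    and YZ: "Y \<inter> Z = {0}" "span (Y \<union> Z) = X"
begin

lemma direct_decomp_split_member: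
  "direct_decomp scale {Y, span (Z \<union> \<Union>(\<X> - {X}))}"
proof -
  let ?R = "span (\<Union>(\<X> - {X}))" and ?T = "span (Z \<union> \<Union>(\<X> - {X}))"
  have YX: "Y \<subseteq> X" and ZX: "Z \<subseteq> X" using YZ(2) span_superset by blast+
  have ZT: "Z \<subseteq> ?T" by (meson Un_upper1 span_superset subset_trans)
  have "w = 0" if w: "w \<in> Y" "w \<in> ?T" for w
  proof -
    from w(2) obtain z s where ws: "w = z + s" "z \<in> Z" "s \<in> ?R"
      unfolding span_Un span_eq_iff[THEN iffD2, OF Z(1)] by blast
    have "s = w - z" using ws(1) by simp
    then have "s \<in> X" using w(1) ws(2) YX ZX direct_decomp_subspace[OF dd X]
      by (auto intro: subspace_diff)
    with ws(3) have "s = 0" using direct_decomp_indep[OF dd X] by blast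
    with ws YZ(1) w(1) show "w = 0" by auto
  qed
  then have "Y \<inter> ?T = {0}" using subspace_0[OF Y(1)] span_zero by blast
  moreover have "span (Y \<union> ?T) = UNIV"
  proof -
    have "X \<subseteq> span (Y \<union> ?T)" using YZ(2) ZT by (metis Un_mono order_refl span_mono)
    moreover have "\<Union>(\<X> - {X}) \<subseteq> span (Y \<union> ?T)"
      by (meson Un_upper2 span_superset subset_trans)
    ultimately have "\<Union>\<X> \<subseteq> span (Y \<union> ?T)" by blast
    then show ?thesis
      using direct_decomp_span[OF dd] by (metis span_minimal subspace_span top.extremum_uniqueI)
  qed
  moreover have "?T \<noteq> {0}" using ZT Z subspace_0 by blast
  ultimately show ?thesis using Y by (intro direct_decomp_pair) auto
qed

lemma proj_split_member:
  defines "f \<equiv> proj scale {Y, span (Z \<union> \<Union>(\<X> - {X}))} Y" and "e \<equiv> proj scale \<X> X"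
  shows "e \<circ> f = f" and "f \<circ> e = f" and "f \<noteq> (\<lambda>_. 0)" and "f \<noteq> e"
proof -
  let ?T = "span (Z \<union> \<Union>(\<X> - {X}))"
  note dd2 = direct_decomp_split_member
  have Y2: "Y \<in> {Y, ?T}" and T2: "?T \<in> {Y, ?T}" by auto
  have ZT: "Z \<subseteq> ?T" by (meson Un_upper1 span_superset subset_trans)
  then have YT: "Y \<noteq> ?T" using YZ(1) Z(2) by blast
  have YX: "Y \<subseteq> X" and ZX: "Z \<subseteq> X" using YZ(2) span_superset by blast+
  show "e \<circ> f = f"
    using proj_in[OF dd2 Y2] YX proj_self[OF dd X] by (auto simp: e_def f_def fun_eq_iff)
  have "u - e u \<in> span (\<Union>({Y, ?T} - {Y}))" for u
  proof -
    have "\<Union>({Y, ?T} - {Y}) = ?T" using YT by auto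
    moreover have "span (\<Union>(\<X> - {X})) \<subseteq> ?T" by (intro span_mono) blast
    ultimately show ?thesis using proj_complement[OF dd X] by (auto simp: e_def span_span)
  qed
  then have "f (u - e u) = 0" for u unfolding f_def by (rule proj_vanishes[OF dd2 Y2])
  then show "f \<circ> e = f"
    using endo.linear_diff[OF linear_proj[OF dd2 Y2]] by (auto simp: f_def fun_eq_iff)
  obtain y where "y \<in> Y" "y \<noteq> 0" using Y subspace_0 by blast
  then show "f \<noteq> (\<lambda>_. 0)" using proj_self[OF dd2 Y2] by (metis f_def)
  obtain z where z: "z \<in> Z" "z \<noteq> 0" using Z subspace_0 by blast
  then have "f z = 0" "e z = z"
    using proj_other[OF dd2 Y2 T2 YT] proj_self[OF dd X] ZX ZT by (auto simp: f_def e_def)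
  with z(2) show "f \<noteq> e" by auto
qed

end

section \<open>Jordan idempotents in the endomorphism algebra\<close>

lemma j_idempotent_iff:
  assumes "(2::'a) \<noteq> 0"
  shows "j_idempotent scale f \<longleftrightarrow> f \<circ> f = f"
proof -
  have "jprod scale f f = f \<circ> f"
  proof
    fix u
    have "f (f u) + f (f u) = scale 2 (f (f u))"
      by (metis one_add_one scale_left_distrib scale_one)
    then show "jprod scale f f u = (f \<circ> f) u" using assms by (simp add: jprod_def)
  qed
  then show ?thesis by (simp add: j_idempotent_def)
qed

text \<open>Applying \<open>f\<close> to \<open>g (f u) + f (g u) = 0\<close> kills the first term (as \<open>fgf = 0\<close>) and
  leaves \<open>f (g u) = 0\<close>.\<close>

lemma j_orthogonal_iff:
  assumes two: "(2::'a) \<noteq> 0"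
    and lin: "Vector_Spaces.linear scale scale f" "Vector_Spaces.linear scale scale g"
    and idem: "f \<circ> f = f" "g \<circ> g = g"
  shows "j_orthogonal scale f g \<longleftrightarrow> f \<circ> g = (\<lambda>_. 0) \<and> g \<circ> f = (\<lambda>_. 0)"
proof
  assume o: "j_orthogonal scale f g"
  have sum0: "g (f u) + f (g u) = 0" for u
    using o two by (auto simp: j_orthogonal_def jprod_def fun_eq_iff)
  have "f (g (f u)) = 0" "g (f (g u)) = 0" for u
    using o by (auto simp: j_orthogonal_def fun_eq_iff)
  moreover have "f (g (f u) + f (g u)) = 0" "g (g (f u) + f (g u)) = 0" for u
    using sum0 lin by (simp_all add: endo.linear_0)
  ultimately show "f \<circ> g = (\<lambda>_. 0) \<and> g \<circ> f = (\<lambda>_. 0)"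
    using idem lin by (simp add: fun_eq_iff endo.linear_add)
next
  assume "f \<circ> g = (\<lambda>_. 0) \<and> g \<circ> f = (\<lambda>_. 0)"
  then show "j_orthogonal scale f g"
    using lin by (simp add: j_orthogonal_def jprod_def fun_eq_iff endo.linear_0)
qed

section \<open>Transport along linear automorphisms\<close>

context
  fixes \<alpha> :: "'b \<Rightarrow> 'b"
  assumes lin: "Vector_Spaces.linear scale scale \<alpha>" and bij: "bij \<alpha>"
begin

lemma conj_inject: "\<alpha> \<circ> f \<circ> inv \<alpha> = \<alpha> \<circ> g \<circ> inv \<alpha> \<longleftrightarrow> f = g"
proof
  assume "\<alpha> \<circ> f \<circ> inv \<alpha> = \<alpha> \<circ> g \<circ> inv \<alpha>"
  then have "\<alpha> (f (inv \<alpha> (\<alpha> u))) = \<alpha> (g (inv \<alpha> (\<alpha> u)))" for u by (metis comp_apply)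
  then show "f = g" using bij by (auto simp: bij_is_inj inj_eq fun_eq_iff)
qed simp

lemma conj_zero: "\<alpha> \<circ> (\<lambda>_. 0) \<circ> inv \<alpha> = (\<lambda>_. 0)"
  and conj_id: "\<alpha> \<circ> id \<circ> inv \<alpha> = id"
  and conj_add: "\<alpha> \<circ> (\<lambda>u. f u + g u) \<circ> inv \<alpha> = (\<lambda>u. (\<alpha> \<circ> f \<circ> inv \<alpha>) u + (\<alpha> \<circ> g \<circ> inv \<alpha>) u)"
  and conj_comp: "(\<alpha> \<circ> f \<circ> inv \<alpha>) \<circ> (\<alpha> \<circ> g \<circ> inv \<alpha>) = \<alpha> \<circ> (f \<circ> g) \<circ> inv \<alpha>"
  using bij by (auto simp: fun_eq_iff endo.linear_0[OF lin] endo.linear_add[OF lin]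
      bij_is_inj bij_is_surj surj_f_inv_f)

lemma conj_eq_0_iff: "\<alpha> \<circ> h \<circ> inv \<alpha> = (\<lambda>_. 0) \<longleftrightarrow> h = (\<lambda>_. 0)"
  and conj_eq_id_iff: "\<alpha> \<circ> h \<circ> inv \<alpha> = id \<longleftrightarrow> h = id"
  using conj_inject[of h "\<lambda>_. 0"] conj_inject[of h id] by (simp_all only: conj_zero conj_id)

lemma jprod_conj:
  "jprod scale (\<alpha> \<circ> f \<circ> inv \<alpha>) (\<alpha> \<circ> g \<circ> inv \<alpha>) = \<alpha> \<circ> jprod scale f g \<circ> inv \<alpha>"
  using bij by (simp add: fun_eq_iff jprod_def bij_is_inj endo.linear_add[OF lin]
      endo.linear_scale[OF lin])

lemma j_idempotent_conj_iff: "j_idempotent scale (\<alpha> \<circ> f \<circ> inv \<alpha>) \<longleftrightarrow> j_idempotent scale f"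
  by (simp add: j_idempotent_def jprod_conj conj_inject)

lemma j_orthogonal_conj_iff:
  "j_orthogonal scale (\<alpha> \<circ> f \<circ> inv \<alpha>) (\<alpha> \<circ> g \<circ> inv \<alpha>) \<longleftrightarrow> j_orthogonal scale f g"
  unfolding j_orthogonal_def jprod_conj conj_comp conj_eq_0_iff ..

context
  fixes \<X>
  assumes dd: "direct_decomp scale \<X>"
begin

lemma span_image_others:
  assumes X: "X \<in> \<X>"
  shows "span (\<Union>((\<lambda>X. \<alpha> ` X) ` \<X> - {\<alpha> ` X})) = \<alpha> ` span (\<Union>(\<X> - {X}))"
proof -
  have "inj (\<lambda>X. \<alpha> ` X)" using bij by (simp add: inj_def inj_image_eq_iff[OF bij_is_inj])
  then have "(\<lambda>X. \<alpha> ` X) ` \<X> - {\<alpha> ` X} = (\<lambda>X. \<alpha> ` X) ` (\<X> - {X})"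
    using image_set_diff[of _ \<X> "{X}"] by (metis image_empty image_insert)
  then show ?thesis by (simp add: image_Union[symmetric] endo.linear_span_image[OF lin])
qed

lemma direct_decomp_image: "direct_decomp scale ((\<lambda>X. \<alpha> ` X) ` \<X>)"
proof -
  have inj: "inj \<alpha>" using bij by (rule bij_is_inj)
  have zero: "\<alpha> ` {0} = {0}" by (simp add: endo.linear_0[OF lin])
  have "\<alpha> ` X \<noteq> {0}" if "X \<in> \<X>" for X
    using direct_decomp_nonzero[OF dd that] inj_image_eq_iff[OF inj, of X "{0}"] zero by simp
  moreover have "\<alpha> ` X \<inter> span (\<Union>((\<lambda>X. \<alpha> ` X) ` \<X> - {\<alpha> ` X})) = {0}" if "X \<in> \<X>" for X
    using direct_decomp_indep[OF dd that] zero
    by (simp add: span_image_others[OF that] image_Int[OF inj, symmetric])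
  moreover have "span (\<Union>((\<lambda>X. \<alpha> ` X) ` \<X>)) = UNIV"
    using direct_decomp_span[OF dd] bij
    by (simp add: image_Union[symmetric] endo.linear_span_image[OF lin] bij_is_surj)
  ultimately show ?thesis
    using direct_decomp_finite[OF dd] direct_decomp_subspace[OF dd]
    by (auto simp: direct_decomp_def endo.linear_subspace_image[OF lin])
qed

lemma proj_image:
  assumes X: "X \<in> \<X>"
  shows "proj scale ((\<lambda>X. \<alpha> ` X) ` \<X>) (\<alpha> ` X) = \<alpha> \<circ> proj scale \<X> X \<circ> inv \<alpha>"
proof
  fix u
  let ?v = "inv \<alpha> u"
  have "u - \<alpha> (proj scale \<X> X ?v) = \<alpha> (?v - proj scale \<X> X ?v)"
    using bij by (simp add: endo.linear_diff[OF lin] bij_is_surj surj_f_inv_f)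
  then have "u - \<alpha> (proj scale \<X> X ?v) \<in> span (\<Union>((\<lambda>X. \<alpha> ` X) ` \<X> - {\<alpha> ` X}))"
    using proj_complement[OF dd X] by (simp add: span_image_others[OF X])
  then show "proj scale ((\<lambda>X. \<alpha> ` X) ` \<X>) (\<alpha> ` X) u = (\<alpha> \<circ> proj scale \<X> X \<circ> inv \<alpha>) u"
    using proj_eqI[OF direct_decomp_image] X proj_in[OF dd X] by simp
qed

lemma decomp_of_conj_proj_set:
  "(\<lambda>X. \<alpha> ` X) ` \<X> = decomp_of (conj_set \<alpha> (proj_set scale \<X>))"
proof -
  have "surj (inv \<alpha>)" using bij by (simp add: bij_is_inj inj_imp_surj_inv)
  then have "range (\<alpha> \<circ> proj scale \<X> X \<circ> inv \<alpha>) = \<alpha> ` X" if "X \<in> \<X>" for X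
    using range_proj[OF dd that] by (simp only: image_comp[symmetric])
  then show ?thesis
    unfolding decomp_of_def conj_set_def proj_set_def image_image by (simp cong: image_cong)
qed

lemma conj_proj_set:
  "conj_set \<alpha> (proj_set scale \<X>) = proj_set scale ((\<lambda>X. \<alpha> ` X) ` \<X>)"
  unfolding conj_set_def proj_set_def image_image by (simp add: proj_image cong: image_cong)

end

end

end

locale bilinear_form = vector_space scale
  for scale :: "'k::field \<Rightarrow> 'v::ab_group_add \<Rightarrow> 'v" +
  fixes sW :: "'k \<Rightarrow> 'w::ab_group_add \<Rightarrow> 'w" and b :: "'v \<Rightarrow> 'v \<Rightarrow> 'w"
  assumes bilinear: "bilinear_map scale sW b"
begin

lemma linear_left: "Vector_Spaces.linear scale sW (\<lambda>u. b u v)"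
  and linear_right: "Vector_Spaces.linear scale sW (b u)"
  using bilinear by (auto simp: bilinear_map_def)

sublocale form: vector_space_pair scale sW
  using linear_left by (auto simp: Vector_Spaces.linear_iff vector_space_pair_def)

lemma b_diff_left: "b (u - u') v = b u v - b u' v"
  and b_diff_right: "b u (v - v') = b u v - b u v'"
  using form.linear_diff[OF linear_left] form.linear_diff[OF linear_right] by auto

lemma b_orth_span:
  assumes "b_orth b A C" and "A' \<subseteq> span A" and "C' \<subseteq> span C"
  shows "b_orth b A' C'"
proof -
  have "b a c = 0" if "a \<in> A" "c \<in> span C" for a c
    using form.linear_eq_0_on_span[OF linear_right _ that(2)] assms(1) that(1)
    by (auto simp: b_orth_def)
  then have "b a c = 0" if "a \<in> span A" "c \<in> span C" for a c
    using form.linear_eq_0_on_span[OF linear_left[of c] _ that(1)] that(2) by blast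
  then show ?thesis using assms(2,3) by (auto simp: b_orth_def)
qed

lemma b_orth_span_right: "b_orth b A C \<Longrightarrow> b_orth b A (span C)"
  and b_orth_span_left: "b_orth b C A \<Longrightarrow> b_orth b (span C) A"
  by (auto intro: b_orth_span[OF _ span_superset order_refl]
      b_orth_span[OF _ order_refl span_superset])

lemma Sym_iff:
  "f \<in> Sym scale b \<longleftrightarrow> Vector_Spaces.linear scale scale f \<and> (\<forall>u v. b (f u) v = b u (f v))"
  by (simp add: Sym_def)

lemma Sym_diff:
  assumes "f \<in> Sym scale b" "g \<in> Sym scale b"
  shows "(\<lambda>u. f u - g u) \<in> Sym scale b"
  using assms by (simp add: Sym_iff endo.linear_compose_sub b_diff_left b_diff_right)

section \<open>Orthogonal decompositions and self-adjoint projections\<close>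

lemma b_orth_others:
  assumes "pairwise (b_orth b) \<X>" and "X \<in> \<X>"
  shows "b_orth b X (\<Union>(\<X> - {X}))" "b_orth b (\<Union>(\<X> - {X})) X"
  using assms unfolding pairwise_def b_orth_def by blast+

context
  fixes \<X> :: "'v set set"
  assumes dd: "direct_decomp scale \<X>"
begin

lemma perp_decomp_iff_pairwise_orth: "perp_decomp scale b \<X> \<longleftrightarrow> pairwise (b_orth b) \<X>"
proof -
  have "span (\<Union>\<Y>) \<noteq> UNIV" if "\<Y> \<subset> \<X>" for \<Y>
  proof
    assume full: "span (\<Union>\<Y>) = UNIV"
    from that obtain X where X: "X \<in> \<X>" "X \<notin> \<Y>" by blast
    have "span (\<Union>\<Y>) \<subseteq> span (\<Union>(\<X> - {X}))" using that X by (intro span_mono) auto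
    with full have "X \<subseteq> {0}" using direct_decomp_indep[OF dd X(1)] by auto
    then show False
      using direct_decomp_nonzero[OF dd X(1)] subspace_0[OF direct_decomp_subspace[OF dd X(1)]]
      by blast
  qed
  then show ?thesis
    using direct_decomp_subspace[OF dd] direct_decomp_span[OF dd]
    unfolding perp_decomp_def perp_decomp_on_def pairwise_def by blast
qed

lemma b_orth_complement:
  assumes orth: "pairwise (b_orth b) \<X>" and X: "X \<in> \<X>"
  shows "b_orth b X (span (\<Union>(\<X> - {X})))" "b_orth b (span (\<Union>(\<X> - {X}))) X"
proof -
  show "b_orth b X (span (\<Union>(\<X> - {X})))" "b_orth b (span (\<Union>(\<X> - {X}))) X"
    using b_orth_others[OF orth X] by (auto intro: b_orth_span_right b_orth_span_left)
qed

lemma proj_set_subset_Sym_iff: "proj_set scale \<X> \<subseteq> Sym scale b \<longleftrightarrow> pairwise (b_orth b) \<X>"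
proof
  assume S: "proj_set scale \<X> \<subseteq> Sym scale b"
  have "b x y = 0" if "X \<in> \<X>" "Y \<in> \<X>" "X \<noteq> Y" "x \<in> X" "y \<in> Y" for X Y x y
  proof -
    have "b x y = b (proj scale \<X> X x) y" using proj_self[OF dd that(1,4)] by simp
    also have "\<dots> = b x (proj scale \<X> X y)" using S that(1) by (auto simp: proj_set_def Sym_iff)
    also have "\<dots> = 0" using proj_other[OF dd that(1-3,5)] form.linear_0[OF linear_right] by simp
    finally show ?thesis .
  qed
  then show "pairwise (b_orth b) \<X>" by (auto simp: pairwise_def b_orth_def)
next
  assume orth: "pairwise (b_orth b) \<X>"
  have "proj scale \<X> X \<in> Sym scale b" if X: "X \<in> \<X>" for X
  proof -
    let ?e = "proj scale \<X> X"
    have "b (?e u) (v - ?e v) = 0" "b (u - ?e u) (?e v) = 0" for u v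
      using b_orth_complement[OF orth X] proj_in[OF dd X] proj_complement[OF dd X]
      by (auto simp: b_orth_def)
    then have "b (?e u) v = b (?e u) (?e v)" "b u (?e v) = b (?e u) (?e v)" for u v
      by (simp_all add: b_diff_left b_diff_right)
    then have "b (?e u) v = b u (?e v)" for u v by simp
    then show ?thesis using linear_proj[OF dd X] by (simp add: Sym_iff)
  qed
  then show "proj_set scale \<X> \<subseteq> Sym scale b" unfolding proj_set_def by blast
qed

end

section \<open>Primitive idempotents and refined decompositions\<close>

lemma range_not_subset_if_annihilated:
  assumes "g \<circ> g = g" "g \<circ> f = (\<lambda>_. 0)" "g \<noteq> (\<lambda>_. 0)"
  shows "\<not> range g \<subseteq> range f"
proof
  assume "range g \<subseteq> range f"
  then have "g u = 0" for u
    using assms(1,2) by (metis (no_types, lifting) comp_apply rangeE rangeI subsetD)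
  with assms(3) show False by auto
qed

lemma perp_decomp_on_ranges:
  assumes S: "f \<in> Sym scale b" "g \<in> Sym scale b"
    and idem: "f \<circ> f = f" "g \<circ> g = g"
    and orth: "f \<circ> g = (\<lambda>_. 0)" "g \<circ> f = (\<lambda>_. 0)"
    and nz: "f \<noteq> (\<lambda>_. 0)" "g \<noteq> (\<lambda>_. 0)"
  shows "perp_decomp_on scale b (range (\<lambda>u. f u + g u)) {range f, range g}"
    and "range f \<noteq> range g"
proof -
  let ?e = "\<lambda>u. f u + g u"
  have lin: "Vector_Spaces.linear scale scale f" "Vector_Spaces.linear scale scale g"
    using S by (auto simp: Sym_iff)
  have sub: "subspace (range f)" "subspace (range g)" "subspace (range ?e)"
    using lin by (auto intro!: endo.linear_subspace_image endo.linear_compose_add)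
  have f_ne_g: "\<not> range f \<subseteq> range g" "\<not> range g \<subseteq> range f"
    using range_not_subset_if_annihilated idem orth nz by blast+
  then show "range f \<noteq> range g" by blast
  have "range h \<subseteq> range ?e" if "\<And>u. ?e (h u) = h u" for h
  proof (rule image_subsetI)
    show "h u \<in> range ?e" for u using rangeI[of ?e "h u"] that by simp
  qed
  moreover have "?e (f u) = f u" "?e (g u) = g u" for u
    using idem orth by (simp_all add: fun_eq_iff)
  ultimately have in_e: "range f \<subseteq> range ?e" "range g \<subseteq> range ?e" by blast+
  have span_fg: "span (range f \<union> range g) = range ?e"
  proof
    show "span (range f \<union> range g) \<subseteq> range ?e" using in_e sub(3) by (intro span_minimal) auto
    show "range ?e \<subseteq> span (range f \<union> range g)" by (auto intro: span_add span_base)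
  qed
  have "b (f u) (g v) = 0" "b (g u) (f v) = 0" for u v
    using S orth form.linear_0[OF linear_right] by (auto simp: Sym_iff fun_eq_iff)
  then have "b_orth b (range f) (range g)" "b_orth b (range g) (range f)"
    by (auto simp: b_orth_def)
  moreover have "span (\<Union>\<Y>) \<noteq> range ?e" if "\<Y> \<subset> {range f, range g}" for \<Y>
  proof -
    have "range f \<noteq> {0}" using nz(1) by (auto simp: fun_eq_iff)
    then have "span {} \<noteq> range ?e" using in_e(1) subspace_0[OF sub(1)] by auto
    moreover have "span (range f) \<noteq> range ?e" "span (range g) \<noteq> range ?e"
      using in_e f_ne_g span_eq_iff[THEN iffD2, OF sub(1)] span_eq_iff[THEN iffD2, OF sub(2)]
      by (auto simp del: span_eq_iff)
    moreover have "\<Y> = {} \<or> \<Y> = {range f} \<or> \<Y> = {range g}" using that by blast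
    ultimately show ?thesis by auto
  qed
  ultimately show "perp_decomp_on scale b (range ?e) {range f, range g}"
    using sub in_e span_fg by (auto simp: perp_decomp_on_def)
qed

lemma not_j_primitive_if_proper_subidempotent:
  assumes two: "(2::'k) \<noteq> 0"
    and S: "e \<in> Sym scale b" "f \<in> Sym scale b"
    and idem: "e \<circ> e = e" "f \<circ> f = f"
    and sub: "e \<circ> f = f" "f \<circ> e = f"
    and proper: "f \<noteq> (\<lambda>_. 0)" "f \<noteq> e"
  shows "\<not> j_primitive scale (Sym scale b) e"
proof
  assume prim: "j_primitive scale (Sym scale b) e"
  define g where "g = (\<lambda>u. e u - f u)"
  have lin: "Vector_Spaces.linear scale scale e" "Vector_Spaces.linear scale scale f"
    using S by (auto simp: Sym_iff)
  have gS: "g \<in> Sym scale b" unfolding g_def using S by (rule Sym_diff)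
  then have lin_g: "Vector_Spaces.linear scale scale g" by (simp add: Sym_iff)
  have fg: "f \<circ> g = (\<lambda>_. 0)" and gf: "g \<circ> f = (\<lambda>_. 0)" and gg: "g \<circ> g = g"
    using idem sub lin by (auto simp: g_def fun_eq_iff endo.linear_diff)
  have "f \<noteq> id" using sub(1) proper(2) by auto
  moreover have "g \<noteq> id" using fg proper(1) by auto
  moreover have "g \<noteq> (\<lambda>_. 0)" using proper(2) by (auto simp: g_def fun_eq_iff) metis
  moreover have "j_idempotent scale f" "j_idempotent scale g"
    using idem gg two by (simp_all add: j_idempotent_iff)
  moreover have "j_orthogonal scale f g"
    using j_orthogonal_iff[OF two lin(2) lin_g idem(2) gg] fg gf by simp
  moreover have "e = (\<lambda>u. f u + g u)" by (simp add: g_def)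
  ultimately show False
    using prim S(2) gS proper(1) unfolding j_primitive_def by blast
qed

lemma perp_decomp_on_split:
  assumes py: "perp_decomp_on scale b X \<Y>" and ne: "\<Y> \<noteq> {X}" and X: "X \<noteq> {0}"
  obtains Y Z where "subspace Y" "Y \<noteq> {0}" "subspace Z" "Z \<noteq> {0}"
    and "b_orth b Y Z" "b_orth b Z Y" "span (Y \<union> Z) = X"
proof -
  have sub: "\<And>Y. Y \<in> \<Y> \<Longrightarrow> subspace Y" and orth: "pairwise (b_orth b) \<Y>"
    and spans: "span (\<Union>\<Y>) = X" and minimal: "\<And>\<Y>'. \<Y>' \<subset> \<Y> \<Longrightarrow> span (\<Union>\<Y>') \<noteq> X"
    using py by (auto simp: perp_decomp_on_def pairwise_def)
  obtain Y where Y: "Y \<in> \<Y>" using spans X by fastforce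
  define Z where "Z = span (\<Union>(\<Y> - {Y}))"
  have "\<Union>\<Y> = Y \<union> \<Union>(\<Y> - {Y})" using Y by blast
  then have YZ: "span (Y \<union> Z) = X" by (simp add: Z_def spans[symmetric] span_Un_span)
  have "Y \<noteq> {0}"
  proof
    assume "Y = {0}"
    then have "span (\<Union>(\<Y> - {Y})) = X" using YZ by (simp add: Z_def span_span)
    with minimal[of "\<Y> - {Y}"] Y show False by blast
  qed
  moreover have "Z \<noteq> {0}"
  proof
    assume "Z = {0}"
    then have "span (\<Union>{Y}) = X" using YZ by simp
    moreover have "\<Y> \<noteq> {Y}"
    proof
      assume "\<Y> = {Y}"
      then have "Y = X" using spans span_eq_iff[THEN iffD2, OF sub[OF Y]] by simp
      with ne \<open>\<Y> = {Y}\<close> show False by simp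
    qed
    ultimately show False using minimal[of "{Y}"] Y by blast
  qed
  moreover have "b_orth b Y Z" "b_orth b Z Y"
  proof -
    have "b_orth b Y (\<Union>(\<Y> - {Y}))" "b_orth b (\<Union>(\<Y> - {Y})) Y"
      using orth Y unfolding pairwise_def b_orth_def by blast+
    then show "b_orth b Y Z" "b_orth b Z Y"
      unfolding Z_def by (auto intro: b_orth_span_right b_orth_span_left)
  qed
  ultimately show ?thesis
    using that[OF sub[OF Y] _ subspace_span[of "\<Union>(\<Y> - {Y})"]] YZ unfolding Z_def by blast
qed

context
  fixes \<X> :: "'v set set"
  assumes two: "(2::'k) \<noteq> 0" and dd: "direct_decomp scale \<X>"
begin

lemma j_primitive_proj_if_fully_refined:
  assumes fr: "fully_refined scale b \<X>" and X: "X \<in> \<X>"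
  shows "j_primitive scale (Sym scale b) (proj scale \<X> X)"
proof -
  let ?e = "proj scale \<X> X"
  have eS: "?e \<in> Sym scale b"
    using fr X proj_set_subset_Sym_iff[OF dd] perp_decomp_iff_pairwise_orth[OF dd]
    by (auto simp: fully_refined_def proj_set_def)
  have "\<not> (j_idempotent scale f \<and> j_idempotent scale g \<and> f \<noteq> (\<lambda>_. 0) \<and> g \<noteq> (\<lambda>_. 0)
      \<and> j_orthogonal scale f g \<and> ?e = (\<lambda>u. f u + g u))"
    if S: "f \<in> Sym scale b" "g \<in> Sym scale b" for f g
  proof
    assume split: "j_idempotent scale f \<and> j_idempotent scale g \<and> f \<noteq> (\<lambda>_. 0) \<and> g \<noteq> (\<lambda>_. 0)
      \<and> j_orthogonal scale f g \<and> ?e = (\<lambda>u. f u + g u)"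
    have lin: "Vector_Spaces.linear scale scale f" "Vector_Spaces.linear scale scale g"
      using S by (auto simp: Sym_iff)
    have idem: "f \<circ> f = f" "g \<circ> g = g" using split two by (auto simp: j_idempotent_iff)
    then have orth: "f \<circ> g = (\<lambda>_. 0)" "g \<circ> f = (\<lambda>_. 0)"
      using split j_orthogonal_iff[OF two lin idem] by auto
    have "range ?e = X" by (rule range_proj[OF dd X])
    then have "perp_decomp_on scale b X {range f, range g}" and ne: "range f \<noteq> range g"
      using perp_decomp_on_ranges[OF S idem orth] split by auto
    with fr X have "{range f, range g} = {X}" by (simp add: fully_refined_def)
    with ne show False by blast
  qed
  moreover have "j_idempotent scale ?e"
    using two by (simp add: j_idempotent_iff fun_eq_iff proj_idem[OF dd X])
  ultimately show ?thesis using eS unfolding j_primitive_def by blast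
qed

lemma j_frame_if_fully_refined:
  assumes "fully_refined scale b \<X>"
  shows "j_frame scale (Sym scale b) (proj_set scale \<X>)"
proof -
  have "j_orthogonal scale (proj scale \<X> X) (proj scale \<X> Y)"
    if "X \<in> \<X>" "Y \<in> \<X>" "X \<noteq> Y" for X Y
    using that j_orthogonal_iff[OF two linear_proj[OF dd] linear_proj[OF dd]]
      proj_idem[OF dd] proj_proj_other[OF dd] by (auto simp: fun_eq_iff)
  moreover have "(\<Sum>e\<in>proj_set scale \<X>. e u) = u" for u
    using sum_proj[OF dd] by (simp add: proj_set_def sum.reindex[OF inj_on_proj[OF dd]])
  ultimately show ?thesis
    using j_primitive_proj_if_fully_refined[OF assms] direct_decomp_finite[OF dd]
    by (auto simp: j_frame_def proj_set_def)
qed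

end

section \<open>Isometries act on frames\<close>

context
  fixes \<alpha> \<alpha>'
  assumes iso: "(\<alpha>, \<alpha>') \<in> Isom_star scale sW b"
begin

lemma Isom_star_linear: "Vector_Spaces.linear scale scale \<alpha>"
  and Isom_star_bij: "bij \<alpha>"
  using iso by (auto simp: Isom_star_def)

lemma Sym_conj_iff: "\<alpha> \<circ> f \<circ> inv \<alpha> \<in> Sym scale b \<longleftrightarrow> f \<in> Sym scale b"
proof -
  note lin = Isom_star_linear and bij = Isom_star_bij
  have inj': "inj \<alpha>'" and compat: "\<And>u v. b (\<alpha> u) (\<alpha> v) = \<alpha>' (b u v)"
    using iso by (auto simp: Isom_star_def bij_is_inj)
  have inv_lin: "Vector_Spaces.linear scale scale (inv \<alpha>)" by (rule linear_inv[OF lin bij])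
  have "f = inv \<alpha> \<circ> (\<alpha> \<circ> f \<circ> inv \<alpha>) \<circ> \<alpha>" using bij by (simp add: fun_eq_iff bij_is_inj)
  then have "Vector_Spaces.linear scale scale (\<alpha> \<circ> f \<circ> inv \<alpha>)
      \<longleftrightarrow> Vector_Spaces.linear scale scale f"
    using lin inv_lin by (metis Vector_Spaces.linear_compose)
  moreover have "b ((\<alpha> \<circ> f \<circ> inv \<alpha>) (\<alpha> u)) (\<alpha> v) = \<alpha>' (b (f u) v)"
      "b (\<alpha> u) ((\<alpha> \<circ> f \<circ> inv \<alpha>) (\<alpha> v)) = \<alpha>' (b u (f v))" for u v
    using bij by (simp_all add: compat bij_is_inj)
  then have "(\<forall>u v. b ((\<alpha> \<circ> f \<circ> inv \<alpha>) u) v = b u ((\<alpha> \<circ> f \<circ> inv \<alpha>) v))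
      \<longleftrightarrow> (\<forall>u v. b (f u) v = b u (f v))"
    using bij inj' by (metis bij_pointE inj_eq)
  ultimately show ?thesis by (simp add: Sym_iff)
qed

lemma j_primitive_conj:
  assumes prim: "j_primitive scale (Sym scale b) e"
  shows "j_primitive scale (Sym scale b) (\<alpha> \<circ> e \<circ> inv \<alpha>)"
proof -
  note lin = Isom_star_linear and bij = Isom_star_bij
  have pullback: "h = \<alpha> \<circ> (inv \<alpha> \<circ> h \<circ> \<alpha>) \<circ> inv \<alpha>" for h
    using bij by (simp add: fun_eq_iff bij_is_surj surj_f_inv_f)
  have "\<not> (j_idempotent scale f \<and> j_idempotent scale g \<and> f \<noteq> (\<lambda>_. 0) \<and> f \<noteq> id
      \<and> g \<noteq> (\<lambda>_. 0) \<and> g \<noteq> id \<and> j_orthogonal scale f g \<and> \<alpha> \<circ> e \<circ> inv \<alpha> = (\<lambda>u. f u + g u))"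
    if "f \<in> Sym scale b" "g \<in> Sym scale b" for f g
  proof -
    obtain f' g' where f: "f = \<alpha> \<circ> f' \<circ> inv \<alpha>" and g: "g = \<alpha> \<circ> g' \<circ> inv \<alpha>"
      using pullback by blast
    have "f' \<in> Sym scale b" "g' \<in> Sym scale b" using that Sym_conj_iff f g by blast+
    moreover have "(\<lambda>u. f u + g u) = \<alpha> \<circ> (\<lambda>u. f' u + g' u) \<circ> inv \<alpha>"
      unfolding f g by (rule conj_add[OF lin bij, symmetric])
    ultimately show ?thesis
      using prim unfolding f g j_primitive_def
      by (simp add: j_idempotent_conj_iff[OF lin bij] j_orthogonal_conj_iff[OF lin bij]
          conj_eq_0_iff[OF lin bij] conj_eq_id_iff[OF lin bij] conj_inject[OF lin bij])
  qed
  moreover have "\<alpha> \<circ> e \<circ> inv \<alpha> \<in> Sym scale b" "j_idempotent scale (\<alpha> \<circ> e \<circ> inv \<alpha>)"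
    using prim Sym_conj_iff j_idempotent_conj_iff[OF lin bij] by (auto simp: j_primitive_def)
  ultimately show ?thesis unfolding j_primitive_def by blast
qed

lemma j_frame_conj:
  assumes frame: "j_frame scale (Sym scale b) F"
  shows "j_frame scale (Sym scale b) (conj_set \<alpha> F)"
proof -
  note lin = Isom_star_linear and bij = Isom_star_bij
  have inj: "inj_on (\<lambda>e. \<alpha> \<circ> e \<circ> inv \<alpha>) F" by (rule inj_onI) (simp add: conj_inject[OF lin bij])
  have "(\<lambda>u. \<Sum>e\<in>conj_set \<alpha> F. e u) = id"
  proof
    fix u
    have "(\<Sum>e\<in>conj_set \<alpha> F. e u) = \<alpha> (\<Sum>e\<in>F. e (inv \<alpha> u))"
      by (simp add: conj_set_def sum.reindex[OF inj] endo.linear_sum[OF lin])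
    also have "\<dots> = u"
      using frame bij by (simp add: j_frame_def fun_eq_iff bij_is_surj surj_f_inv_f)
    finally show "(\<Sum>e\<in>conj_set \<alpha> F. e u) = id u" by simp
  qed
  then show ?thesis
    using frame j_primitive_conj j_orthogonal_conj_iff[OF lin bij]
    by (auto simp: j_frame_def conj_set_def)
qed

end

end

locale nondegenerate_bilinear_form = bilinear_form scale sW b
  for scale :: "'k::field \<Rightarrow> 'v::ab_group_add \<Rightarrow> 'v"
    and sW :: "'k \<Rightarrow> 'w::ab_group_add \<Rightarrow> 'w" and b :: "'v \<Rightarrow> 'v \<Rightarrow> 'w" +
  assumes nondegenerate: "nondegenerate b"
begin

lemma eq_0_if_orth_spanning:
  assumes orth: "\<And>a. a \<in> A \<Longrightarrow> b w a = 0 \<and> b a w = 0" and A: "span A = UNIV"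
  shows "w = 0"
proof -
  have "b w v = 0" "b v w = 0" for v
    using form.linear_eq_0_on_span[OF linear_right, of A w v]
      form.linear_eq_0_on_span[OF linear_left, of A w v] orth A by auto
  then show ?thesis using nondegenerate by (simp add: nondegenerate_def)
qed

text \<open>A vector of \<open>Y \<inter> Z\<close> is orthogonal to \<open>X = Y + Z\<close> and to the other members,
  hence to all of \<open>V\<close>.\<close>

lemma perp_split_Int_eq_0:
  assumes dd: "direct_decomp scale \<X>" and orth: "pairwise (b_orth b) \<X>" and X: "X \<in> \<X>"
    and Y: "subspace Y" and Z: "subspace Z"
    and YZ: "b_orth b Y Z" "b_orth b Z Y" "span (Y \<union> Z) = X"
  shows "Y \<inter> Z = {0}"
proof -
  let ?R = "\<Union>(\<X> - {X})"
  note XR = b_orth_others[OF orth X]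
  have YX: "Y \<subseteq> X" using YZ(3) span_superset by blast
  have spanning: "span (Y \<union> Z \<union> ?R) = UNIV"
  proof -
    have "X \<subseteq> span (Y \<union> Z \<union> ?R)" using YZ(3) by (metis Un_upper1 span_mono)
    moreover have "?R \<subseteq> span (Y \<union> Z \<union> ?R)" using span_superset[of "Y \<union> Z \<union> ?R"] by blast
    ultimately have "\<Union>\<X> \<subseteq> span (Y \<union> Z \<union> ?R)" by blast
    then show ?thesis
      using direct_decomp_span[OF dd] by (metis span_minimal subspace_span top.extremum_uniqueI)
  qed
  have "w = 0" if w: "w \<in> Y \<inter> Z" for w
  proof (rule eq_0_if_orth_spanning[OF _ spanning])
    fix a assume "a \<in> Y \<union> Z \<union> ?R"
    then show "b w a = 0 \<and> b a w = 0" using w YZ(1,2) XR YX unfolding b_orth_def by blast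
  qed
  then show ?thesis using subspace_0[OF Y] subspace_0[OF Z] by blast
qed

lemma not_j_primitive_proj_if_perp_split:
  assumes two: "(2::'k) \<noteq> 0" and dd: "direct_decomp scale \<X>"
    and orth: "pairwise (b_orth b) \<X>" and X: "X \<in> \<X>"
    and Y: "subspace Y" "Y \<noteq> {0}" and Z: "subspace Z" "Z \<noteq> {0}"
    and YZ: "b_orth b Y Z" "b_orth b Z Y" "span (Y \<union> Z) = X"
  shows "\<not> j_primitive scale (Sym scale b) (proj scale \<X> X)"
proof -
  let ?R = "\<Union>(\<X> - {X})" and ?T = "span (Z \<union> \<Union>(\<X> - {X}))"
  note XR = b_orth_others[OF orth X]
  have YX: "Y \<subseteq> X" using YZ(3) span_superset by blast
  have "Y \<inter> Z = {0}" by (rule perp_split_Int_eq_0[OF dd orth X Y(1) Z(1) YZ])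
  note split = Y Z this YZ(3)
  note dd2 = direct_decomp_split_member[OF dd X split]
  have "b_orth b Y (Z \<union> ?R)" "b_orth b (Z \<union> ?R) Y"
    using YZ(1,2) XR YX unfolding b_orth_def by blast+
  then have "pairwise (b_orth b) {Y, ?T}"
    by (auto simp: pairwise_def intro: b_orth_span_right b_orth_span_left)
  then have "proj scale {Y, ?T} Y \<in> Sym scale b"
    using proj_set_subset_Sym_iff[OF dd2] by (auto simp: proj_set_def)
  moreover have "proj scale \<X> X \<in> Sym scale b"
    using proj_set_subset_Sym_iff[OF dd] orth X by (auto simp: proj_set_def)
  ultimately show ?thesis
    using not_j_primitive_if_proper_subidempotent[OF two] proj_split_member[OF dd X split]
      proj_idem[OF dd X] proj_idem[OF dd2] by (auto simp: fun_eq_iff)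
qed

lemma fully_refined_if_j_frame:
  assumes two: "(2::'k) \<noteq> 0" and dd: "direct_decomp scale \<X>"
    and frame: "j_frame scale (Sym scale b) (proj_set scale \<X>)"
  shows "fully_refined scale b \<X>"
proof -
  have orth: "pairwise (b_orth b) \<X>"
    using frame proj_set_subset_Sym_iff[OF dd] by (auto simp: j_frame_def j_primitive_def)
  have "\<Y> = {X}" if X: "X \<in> \<X>" and py: "perp_decomp_on scale b X \<Y>" for X \<Y>
  proof (rule ccontr)
    assume "\<Y> \<noteq> {X}"
    then obtain Y Z where "subspace Y" "Y \<noteq> {0}" "subspace Z" "Z \<noteq> {0}"
      "b_orth b Y Z" "b_orth b Z Y" "span (Y \<union> Z) = X"
      using perp_decomp_on_split[OF py] direct_decomp_nonzero[OF dd X] by blast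
    then have "\<not> j_primitive scale (Sym scale b) (proj scale \<X> X)"
      using not_j_primitive_proj_if_perp_split[OF two dd orth X] by blast
    with frame X show False by (auto simp: j_frame_def proj_set_def)
  qed
  then show ?thesis
    using orth perp_decomp_iff_pairwise_orth[OF dd] by (simp add: fully_refined_def)
qed

end

theorem theorem4p29:
  fixes sV :: "'k::{field,finite} \<Rightarrow> 'v::ab_group_add \<Rightarrow> 'v"
    and sW :: "'k \<Rightarrow> 'w::ab_group_add \<Rightarrow> 'w"
    and b :: "'v \<Rightarrow> 'v \<Rightarrow> 'w"
    and \<X> :: "'v set set"
  assumes odd_char: "odd CHAR('k)"
    and V: "\<exists>B. finite_dimensional_vector_space sV B"
    and W: "vector_space sW"
    and bil: "bilinear_map sV sW b"
    and herm: "hermitian sV sW b"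
    and nd: "nondegenerate b"
    and dd: "direct_decomp sV \<X>"
  shows "(proj_set sV \<X> \<subseteq> Sym sV b \<longleftrightarrow> perp_decomp sV b \<X>)
    \<and> (fully_refined sV b \<X> \<longleftrightarrow> j_frame sV (Sym sV b) (proj_set sV \<X>))
    \<and> (\<forall>\<alpha> \<alpha>'. perp_decomp sV b \<X> \<and> (\<alpha>, \<alpha>') \<in> Isom_star sV sW b \<longrightarrow>
          (\<lambda>X. \<alpha> ` X) ` \<X> = decomp_of (conj_set \<alpha> (proj_set sV \<X>)) \<and>
          conj_set \<alpha> (proj_set sV \<X>) = proj_set sV ((\<lambda>X. \<alpha> ` X) ` \<X>))
    \<and> (\<forall>\<alpha> \<alpha>' F. (\<alpha>, \<alpha>') \<in> Isom_star sV sW b \<and> j_frame sV (Sym sV b) F \<longrightarrow>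
          j_frame sV (Sym sV b) (conj_set \<alpha> F))"
proof -
  have "vector_space sV" using V finite_dimensional_vector_space.axioms(1) by blast
  then interpret nondegenerate_bilinear_form sV sW b
    using bil nd
    by (simp add: nondegenerate_bilinear_form_def nondegenerate_bilinear_form_axioms_def
        bilinear_form_def bilinear_form_axioms_def)
  have two: "(2::'k) \<noteq> 0" by (rule two_neq_zero_if_odd_char[OF odd_char])
  show ?thesis
  proof (intro conjI allI impI)
    show "proj_set sV \<X> \<subseteq> Sym sV b \<longleftrightarrow> perp_decomp sV b \<X>"
      using proj_set_subset_Sym_iff[OF dd] perp_decomp_iff_pairwise_orth[OF dd] by simp
    show "fully_refined sV b \<X> \<longleftrightarrow> j_frame sV (Sym sV b) (proj_set sV \<X>)"
      using j_frame_if_fully_refined[OF two dd] fully_refined_if_j_frame[OF two dd] by blast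
  next
    fix \<alpha> \<alpha>' assume "perp_decomp sV b \<X> \<and> (\<alpha>, \<alpha>') \<in> Isom_star sV sW b"
    then have lin: "Vector_Spaces.linear sV sV \<alpha>" and bij: "bij \<alpha>"
      using Isom_star_linear Isom_star_bij by blast+
    show "(\<lambda>X. \<alpha> ` X) ` \<X> = decomp_of (conj_set \<alpha> (proj_set sV \<X>))"
      by (rule decomp_of_conj_proj_set[OF lin bij dd])
    show "conj_set \<alpha> (proj_set sV \<X>) = proj_set sV ((\<lambda>X. \<alpha> ` X) ` \<X>)"
      by (rule conj_proj_set[OF lin bij dd])
  next
    fix \<alpha> \<alpha>' F assume "(\<alpha>, \<alpha>') \<in> Isom_star sV sW b \<and> j_frame sV (Sym sV b) F"
    then show "j_frame sV (Sym sV b) (conj_set \<alpha> F)" using j_frame_conj by blast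
  qed
qed

end
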